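(* The Urysohn space $\mathbb U$ is almost-isometry unique: every metric space almost isometric to $\mathbb U$ is isometric to $\mathbb U$.
   Context: $\mathbb U$ denotes Urysohn's universal separable metric space: the unique (up to isometry) complete separable metric space such that for every finite metric space $F=\{x_0,\dots,x_n\}$, every isometry $\{x_0,\dots,x_{n-1}\}\to\mathbb U$ extends to an isometry $F\to\mathbb U$. For $\lambda>1$, an injection $f$ is $\lambda$-bi-Lipschitz if for all distinct $a,b$ in its domain $d(f(a),f(b))<\lambda d(a,b)$ and $d(a,b)<\lambda d(f(a),f(b))$. Two metric spaces $X,Y$ are almost isometric if for every $\lambda>1$ there is a $\lambda$-bi-Lipschitz bijection from $X$ onto $Y$. *)

theory Defs
  imports "HOL-Analysis.Analysis"
begin

definition isometric_embedding ::
  "('a \<Rightarrow> 'b) \<Rightarrow> 'a set \<Rightarrow> ('a \<Rightarrow> 'a \<Rightarrow> real) \<Rightarrow> 'b set \<Rightarrow> ('b \<Rightarrow> 'b \<Rightarrow> real) \<Rightarrow> bool" where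
  "isometric_embedding f A dA B dB \<longleftrightarrow>
     f ` A \<subseteq> B \<and> (\<forall>a\<in>A. \<forall>b\<in>A. dB (f a) (f b) = dA a b)"

text \<open>Urysohn space: complete separable metric space with the one-point extension property
  for finite metric spaces (finite metric spaces are taken, up to isometry, on finite sets of naturals).\<close>
definition Urysohn_space :: "'a set \<Rightarrow> ('a \<Rightarrow> 'a \<Rightarrow> real) \<Rightarrow> bool" where
  "Urysohn_space U d \<longleftrightarrow>
     Metric_space U d \<and> Metric_space.mcomplete U d \<and>
     separable_space (Metric_space.mtopology U d) \<and>
     (\<forall>(F::nat set) dF x g. finite F \<and> Metric_space F dF \<and> x \<in> F \<and>
        isometric_embedding g (F - {x}) dF U d \<longrightarrow>
        (\<exists>h. isometric_embedding h F dF U d \<and> (\<forall>y\<in>F - {x}. h y = g y)))"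

definition bi_lipschitz ::
  "real \<Rightarrow> ('a \<Rightarrow> 'b) \<Rightarrow> 'a set \<Rightarrow> ('a \<Rightarrow> 'a \<Rightarrow> real) \<Rightarrow> ('b \<Rightarrow> 'b \<Rightarrow> real) \<Rightarrow> bool" where
  "bi_lipschitz L f A dA dB \<longleftrightarrow> inj_on f A \<and>
     (\<forall>a\<in>A. \<forall>b\<in>A. a \<noteq> b \<longrightarrow>
        dB (f a) (f b) < L * dA a b \<and> dA a b < L * dB (f a) (f b))"

definition almost_isometric ::
  "'a set \<Rightarrow> ('a \<Rightarrow> 'a \<Rightarrow> real) \<Rightarrow> 'b set \<Rightarrow> ('b \<Rightarrow> 'b \<Rightarrow> real) \<Rightarrow> bool" where
  "almost_isometric X dX Y dY \<longleftrightarrow>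
     (\<forall>L>1. \<exists>f. bij_betw f X Y \<and> bi_lipschitz L f X dX dY)"

definition isometric ::
  "'a set \<Rightarrow> ('a \<Rightarrow> 'a \<Rightarrow> real) \<Rightarrow> 'b set \<Rightarrow> ('b \<Rightarrow> 'b \<Rightarrow> real) \<Rightarrow> bool" where
  "isometric X dX Y dY \<longleftrightarrow>
     (\<exists>f. bij_betw f X Y \<and> (\<forall>a\<in>X. \<forall>b\<in>X. dY (f a) (f b) = dX a b))"

end

theory Submission
  imports Defs
begin

(* Call a positive function r on a finite set A Katetov if |r a - r b| <= d a b <= r a + r b:
   these are exactly the distance profiles over A of a possible new point. A complete separable
   metric space in which every Katetov function is realized by a point is isometric to U: a
   back-and-forth enumeration of dense sequences builds a partial isometry with dense domain and
   range, and by completeness its closure is an isometry onto.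

   Let f : X -> U be an L-bi-Lipschitz bijection.
   For a Katetov function r on a finite A in X, the function r/L + c on f`A is Katetov in U for a
   suitable constant c; realizing it in U and pulling back gives a point realizing r up to an
   error (L^2 - 1) * (sum of r), which is arbitrarily small as L tends to 1. Approximate
   realizations improve to exact ones: asking the next approximant to lie within e of the current
   one is itself a Katetov condition, so with halving errors the approximants form a Cauchy
   sequence whose limit realizes r exactly. *)

section \<open>Katetov functions and the Urysohn space\<close>

definition katetov :: "'a set \<Rightarrow> ('a \<Rightarrow> 'a \<Rightarrow> real) \<Rightarrow> 'a set \<Rightarrow> ('a \<Rightarrow> real) \<Rightarrow> bool" where
  "katetov S d A r \<longleftrightarrow> finite A \<and> A \<subseteq> S \<and> (\<forall>a\<in>A. 0 < r a) \<and>
     (\<forall>a\<in>A. \<forall>b\<in>A. r a \<le> r b + d a b \<and> d a b \<le> r a + r b)"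

definition extension_property :: "'a set \<Rightarrow> ('a \<Rightarrow> 'a \<Rightarrow> real) \<Rightarrow> bool" where
  "extension_property S d \<longleftrightarrow> (\<forall>A r. katetov S d A r \<longrightarrow> (\<exists>y\<in>S. \<forall>a\<in>A. d y a = r a))"

definition approx_extension_property :: "'a set \<Rightarrow> ('a \<Rightarrow> 'a \<Rightarrow> real) \<Rightarrow> bool" where
  "approx_extension_property S d \<longleftrightarrow>
     (\<forall>A r e. katetov S d A r \<and> 0 < e \<longrightarrow> (\<exists>y\<in>S. \<forall>a\<in>A. \<bar>d y a - r a\<bar> \<le> e))"

lemma katetovD:
  assumes "katetov S d A r"
  shows "finite A" "A \<subseteq> S" "\<And>a. a \<in> A \<Longrightarrow> 0 < r a"
    and "\<And>a b. a \<in> A \<Longrightarrow> b \<in> A \<Longrightarrow> r a \<le> r b + d a b"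
    and "\<And>a b. a \<in> A \<Longrightarrow> b \<in> A \<Longrightarrow> d a b \<le> r a + r b"
  using assms by (auto simp: katetov_def)

lemma extension_property_nonempty:
  assumes "extension_property S d"
  shows "S \<noteq> {}"
  using assms unfolding extension_property_def katetov_def by blast

(* The extension of A by one new point None at distances r; the absolute values only matter off
   A, since Metric_space demands nonnegativity of the distance everywhere. *)
definition one_point_dist :: "('a \<Rightarrow> 'a \<Rightarrow> real) \<Rightarrow> ('a \<Rightarrow> real) \<Rightarrow> 'a option \<Rightarrow> 'a option \<Rightarrow> real" where
  "one_point_dist d r p q = (case (p, q) of
     (Some a, Some b) \<Rightarrow> d a b | (Some a, None) \<Rightarrow> \<bar>r a\<bar> | (None, Some b) \<Rightarrow> \<bar>r b\<bar> | (None, None) \<Rightarrow> 0)"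

lemma Metric_space_one_point_dist:
  assumes "Metric_space S d" and "katetov S d A r"
  shows "Metric_space (insert None (Some ` A)) (one_point_dist d r)"
proof -
  interpret Metric_space S d by fact
  have A: "A \<subseteq> S" and pos: "\<And>a. a \<in> A \<Longrightarrow> 0 < r a"
    and lip: "\<And>a b. a \<in> A \<Longrightarrow> b \<in> A \<Longrightarrow> r a \<le> r b + d a b \<and> r a \<le> r b + d b a"
    and tri: "\<And>a b. a \<in> A \<Longrightarrow> b \<in> A \<Longrightarrow> d a b \<le> r a + r b"
    using assms(2) unfolding katetov_def by (auto simp: commute)
  have abs_r [simp]: "a \<in> A \<Longrightarrow> \<bar>r a\<bar> = r a" for a
    using pos by fastforce
  show ?thesis
  proof
    fix p q show "0 \<le> one_point_dist d r p q" "one_point_dist d r p q = one_point_dist d r q p"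
      by (auto simp: one_point_dist_def commute split: option.split)
  next
    fix p q assume "p \<in> insert None (Some ` A)" "q \<in> insert None (Some ` A)"
    then show "one_point_dist d r p q = 0 \<longleftrightarrow> p = q"
      using A by (elim insertE imageE) (auto simp: one_point_dist_def subset_iff dest: pos)
  next
    fix p q s assume "p \<in> insert None (Some ` A)" "q \<in> insert None (Some ` A)" "s \<in> insert None (Some ` A)"
    then show "one_point_dist d r p s \<le> one_point_dist d r p q + one_point_dist d r q s"
      using A by (elim insertE imageE)
        (simp_all add: one_point_dist_def subset_iff less_imp_le pos triangle lip tri add.commute)
  qed
qed

lemma Metric_space_pullback:
  assumes "Metric_space (\<phi> ` S) D" and "inj_on \<phi> S"
  shows "Metric_space S (\<lambda>i j. D (\<phi> i) (\<phi> j))"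
proof -
  interpret Metric_space "\<phi> ` S" D by fact
  show ?thesis
  proof
    fix i j show "0 \<le> D (\<phi> i) (\<phi> j)" "D (\<phi> i) (\<phi> j) = D (\<phi> j) (\<phi> i)"
      by (simp_all add: commute)
  next
    fix i j assume "i \<in> S" "j \<in> S"
    then show "D (\<phi> i) (\<phi> j) = 0 \<longleftrightarrow> i = j"
      using assms(2) by (simp add: inj_on_eq_iff)
  next
    fix i j k assume "i \<in> S" "j \<in> S" "k \<in> S"
    then show "D (\<phi> i) (\<phi> k) \<le> D (\<phi> i) (\<phi> j) + D (\<phi> j) (\<phi> k)"
      by (simp add: triangle)
  qed
qed

lemma bij_betw_option_enumeration:
  assumes "finite A"
  obtains n :: nat and e :: "nat \<Rightarrow> 'a" where "e ` {..<n} = A"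
    and "bij_betw (\<lambda>i. if i = n then None else Some (e i)) {..n} (insert None (Some ` A))"
proof -
  define n where "n = card A"
  obtain e where "bij_betw e {..<n} A"
    using ex_bij_betw_nat_finite[OF \<open>finite A\<close>] by (auto simp: atLeast0LessThan n_def)
  then have e: "inj_on e {..<n}" "e ` {..<n} = A"
    by (simp_all add: bij_betw_def)
  define \<phi> where "\<phi> i = (if i = n then None else Some (e i))" for i
  have "inj_on \<phi> {..n}"
    using e(1) unfolding inj_on_def \<phi>_def
    by (metis atMost_iff le_neq_implies_less lessThan_iff option.distinct(1) option.inject)
  moreover have "\<phi> ` {..n} = insert None (Some ` A)"
  proof -
    have "\<phi> ` {..<n} = Some ` e ` {..<n}"
      unfolding image_image by (rule image_cong) (auto simp: \<phi>_def)
    moreover have "{..n} = insert n {..<n}" "\<phi> n = None"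
      by (auto simp: \<phi>_def)
    ultimately show ?thesis
      using e(2) by simp
  qed
  ultimately have "bij_betw \<phi> {..n} (insert None (Some ` A))"
    by (simp add: bij_betw_def)
  then show ?thesis
    by (intro that[OF e(2)]) (simp add: \<phi>_def[abs_def])
qed

lemma Urysohn_space_extension_property:
  assumes "Urysohn_space U d"
  shows "extension_property U d"
  unfolding extension_property_def
proof (intro allI impI)
  fix A r assume kat: "katetov U d A r"
  have M: "Metric_space U d"
    and one_point: "\<And>(F::nat set) dF x g. finite F \<Longrightarrow> Metric_space F dF \<Longrightarrow> x \<in> F \<Longrightarrow>
      isometric_embedding g (F - {x}) dF U d \<Longrightarrow>
      \<exists>h. isometric_embedding h F dF U d \<and> (\<forall>y\<in>F - {x}. h y = g y)"
    using assms unfolding Urysohn_space_def by blast+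
  note A = katetovD[OF kat]
  (* Urysohn_space speaks about finite metric spaces on nat: transport the one-point extension
     to {..n}, with n as the new point. *)
  obtain n :: nat and e :: "nat \<Rightarrow> 'a" where e: "e ` {..<n} = A"
    and \<phi>: "bij_betw (\<lambda>i. if i = n then None else Some (e i)) {..n} (insert None (Some ` A))"
    using bij_betw_option_enumeration[OF A(1)] by blast
  define \<phi> where "\<phi> = (\<lambda>i. if i = n then None else Some (e i))"
  have "inj_on \<phi> {..n}" "\<phi> ` {..n} = insert None (Some ` A)"
    using \<phi> unfolding \<phi>_def bij_betw_def by simp_all
  then have dF: "Metric_space {..n} (\<lambda>i j. one_point_dist d r (\<phi> i) (\<phi> j))"
    using Metric_space_pullback[of \<phi> "{..n}"] Metric_space_one_point_dist[OF M kat] by simp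
  have "{..n} - {n} = {..<n}"
    by auto
  then have "isometric_embedding e ({..n} - {n}) (\<lambda>i j. one_point_dist d r (\<phi> i) (\<phi> j)) U d"
    using e A(2) by (auto simp: isometric_embedding_def \<phi>_def one_point_dist_def)
  then obtain h where h: "isometric_embedding h {..n} (\<lambda>i j. one_point_dist d r (\<phi> i) (\<phi> j)) U d"
    and he: "\<forall>i\<in>{..n} - {n}. h i = e i"
    using one_point[OF _ dF] by blast
  show "\<exists>y\<in>U. \<forall>a\<in>A. d y a = r a"
  proof (intro bexI ballI)
    show "h n \<in> U"
      using h by (auto simp: isometric_embedding_def)
    fix a assume "a \<in> A"
    then obtain i where i: "i < n" "a = e i"
      using e by auto
    then have "d (h n) (h i) = \<bar>r (e i)\<bar>"
      using h by (auto simp: isometric_embedding_def \<phi>_def one_point_dist_def)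
    then show "d (h n) a = r a"
      using he i A(3)[OF \<open>a \<in> A\<close>] by auto
  qed
qed

section \<open>Back and forth\<close>

lemma (in Metric_space) mdist_diff_le:
  assumes "x \<in> M" "y \<in> M" "x' \<in> M" "y' \<in> M"
  shows "\<bar>d x x' - d y y'\<bar> \<le> d x y + d x' y'"
  using assms by (smt (verit) commute triangle)

definition partial_isometry ::
  "'a set \<Rightarrow> ('a \<Rightarrow> 'a \<Rightarrow> real) \<Rightarrow> 'b set \<Rightarrow> ('b \<Rightarrow> 'b \<Rightarrow> real) \<Rightarrow> ('a \<times> 'b) set \<Rightarrow> bool" where
  "partial_isometry X dX Y dY R \<longleftrightarrow>
     R \<subseteq> X \<times> Y \<and> (\<forall>a b a' b'. (a, b) \<in> R \<longrightarrow> (a', b') \<in> R \<longrightarrow> dY b b' = dX a a')"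

lemma partial_isometry_converse [simp]:
  "partial_isometry Y dY X dX (R\<inverse>) \<longleftrightarrow> partial_isometry X dX Y dY R"
  unfolding partial_isometry_def by (auto simp: eq_commute)

lemma partial_isometryD:
  assumes "partial_isometry X dX Y dY R" and "(a, b) \<in> R" and "(a', b') \<in> R"
  shows "dY b b' = dX a a'"
  using assms unfolding partial_isometry_def by blast

lemma partial_isometry_UN_incseq:
  assumes "incseq Rs" and "\<And>n. partial_isometry X dX Y dY (Rs n)"
  shows "partial_isometry X dX Y dY (\<Union>n. Rs n)"
  unfolding partial_isometry_def
proof (intro conjI allI impI)
  show "(\<Union>n. Rs n) \<subseteq> X \<times> Y"
    using assms(2) by (auto simp: partial_isometry_def)
next
  fix a b a' b' assume "(a, b) \<in> (\<Union>n. Rs n)" "(a', b') \<in> (\<Union>n. Rs n)"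
  then obtain m n where "(a, b) \<in> Rs m" "(a', b') \<in> Rs n"
    by blast
  then have "(a, b) \<in> Rs (max m n)" "(a', b') \<in> Rs (max m n)"
    using monoD[OF assms(1), of m "max m n"] monoD[OF assms(1), of n "max m n"] by auto
  then show "dY b b' = dX a a'"
    by (rule partial_isometryD[OF assms(2)])
qed

lemma partial_isometry_the_fst:
  assumes X: "Metric_space X dX" and Y: "Metric_space Y dY" and R: "partial_isometry X dX Y dY R"
    and "(a, b) \<in> R"
  shows "(THE a. (a, b) \<in> R) = a"
proof (rule the_equality)
  interpret X: Metric_space X dX by fact
  interpret Y: Metric_space Y dY by fact
  show "(a, b) \<in> R" by fact
  fix a' assume "(a', b) \<in> R"
  then have "a \<in> X" "a' \<in> X" "b \<in> Y"
    using R \<open>(a, b) \<in> R\<close> by (auto simp: partial_isometry_def)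
  moreover have "dY b b = dX a a'"
    using partial_isometryD[OF R \<open>(a, b) \<in> R\<close> \<open>(a', b) \<in> R\<close>] .
  ultimately show "a' = a"
    by (metis X.zero Y.mdist_zero)
qed

lemma katetov_partial_isometry_profile:
  assumes X: "Metric_space X dX" and Y: "Metric_space Y dY"
    and "finite R" and R: "partial_isometry X dX Y dY R" and "x \<in> X" and "x \<notin> Domain R"
  shows "katetov Y dY (Range R) (\<lambda>b. dX x (THE a. (a, b) \<in> R))"
proof -
  interpret X: Metric_space X dX by fact
  have RXY: "R \<subseteq> X \<times> Y"
    using R by (simp add: partial_isometry_def)
  note the_fst = partial_isometry_the_fst[OF X Y R]
  have pos: "0 < dX x (THE a. (a, b) \<in> R)" if "(a, b) \<in> R" for a b
  proof -
    have "a \<in> X" "x \<noteq> a"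
      using that RXY \<open>x \<notin> Domain R\<close> by auto
    then show ?thesis
      using the_fst[OF that] \<open>x \<in> X\<close> by simp
  qed
  have "dX x a \<le> dX x a' + dY b b'" "dY b b' \<le> dX x a + dX x a'"
    if ab: "(a, b) \<in> R" "(a', b') \<in> R" for a b a' b'
  proof -
    have "a \<in> X" "a' \<in> X"
      using RXY ab by auto
    then show "dX x a \<le> dX x a' + dY b b'" "dY b b' \<le> dX x a + dX x a'"
      using partial_isometryD[OF R ab] X.triangle'' X.triangle' \<open>x \<in> X\<close> by auto
  qed
  then show ?thesis
    unfolding katetov_def using \<open>finite R\<close> RXY pos the_fst by (auto simp: finite_Range)
qed

lemma partial_isometry_extend:
  assumes X: "Metric_space X dX" and Y: "Metric_space Y dY" and ext: "extension_property Y dY"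
    and "finite R" and R: "partial_isometry X dX Y dY R" and "x \<in> X"
  obtains y where "partial_isometry X dX Y dY (insert (x, y) R)"
proof (cases "x \<in> Domain R")
  case True
  then obtain y where "(x, y) \<in> R"
    by force
  then show ?thesis
    using R that[of y] by (simp add: insert_absorb)
next
  case False
  interpret X: Metric_space X dX by fact
  interpret Y: Metric_space Y dY by fact
  obtain y where "y \<in> Y" and y: "\<forall>b\<in>Range R. dY y b = dX x (THE a. (a, b) \<in> R)"
    using ext katetov_partial_isometry_profile[OF X Y \<open>finite R\<close> R \<open>x \<in> X\<close> False]
    unfolding extension_property_def by blast
  have "dY y b = dX x a" "dY b y = dX a x" if "(a, b) \<in> R" for a b
    using y partial_isometry_the_fst[OF X Y R that] that X.commute Y.commute by force+
  then have "partial_isometry X dX Y dY (insert (x, y) R)"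
    using R \<open>x \<in> X\<close> \<open>y \<in> Y\<close> by (auto simp: partial_isometry_def)
  then show ?thesis
    by (rule that)
qed

lemma partial_isometry_back_and_forth:
  assumes X: "Metric_space X dX" and Y: "Metric_space Y dY"
    and "extension_property X dX" and "extension_property Y dY"
    and "finite R" and "partial_isometry X dX Y dY R" and "x \<in> X" and "y \<in> Y"
  obtains R' where "R \<subseteq> R'" "finite R'" "partial_isometry X dX Y dY R'" "x \<in> Domain R'" "y \<in> Range R'"
proof -
  obtain y' where forth: "partial_isometry X dX Y dY (insert (x, y') R)"
    by (rule partial_isometry_extend[OF X Y assms(4-7)])
  obtain x' where "partial_isometry Y dY X dX (insert (y, x') ((insert (x, y') R)\<inverse>))"
    by (rule partial_isometry_extend[OF Y X assms(3) _ _ assms(8), where R = "(insert (x, y') R)\<inverse>"])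
      (use forth assms(5) in auto)
  moreover have "insert (y, x') ((insert (x, y') R)\<inverse>) = (insert (x', y) (insert (x, y') R))\<inverse>"
    by auto
  ultimately have "partial_isometry X dX Y dY (insert (x', y) (insert (x, y') R))"
    by simp
  then show ?thesis
    by (rule that[rotated 2]) (use \<open>finite R\<close> in auto)
qed

definition graph_closure ::
  "'a set \<Rightarrow> ('a \<Rightarrow> 'a \<Rightarrow> real) \<Rightarrow> 'b set \<Rightarrow> ('b \<Rightarrow> 'b \<Rightarrow> real) \<Rightarrow> ('a \<times> 'b) set \<Rightarrow> ('a \<times> 'b) set" where
  "graph_closure X dX Y dY R =
     {(x, y) \<in> X \<times> Y. \<forall>e>0. \<exists>a b. (a, b) \<in> R \<and> dX x a < e \<and> dY y b < e}"

lemma graph_closure_converse: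
  "graph_closure Y dY X dX (R\<inverse>) = (graph_closure X dX Y dY R)\<inverse>"
  unfolding graph_closure_def by blast

lemma partial_isometry_graph_closure:
  assumes X: "Metric_space X dX" and Y: "Metric_space Y dY" and R: "partial_isometry X dX Y dY R"
  shows "partial_isometry X dX Y dY (graph_closure X dX Y dY R)"
  unfolding partial_isometry_def
proof (intro conjI allI impI)
  interpret X: Metric_space X dX by fact
  interpret Y: Metric_space Y dY by fact
  show "graph_closure X dX Y dY R \<subseteq> X \<times> Y"
    by (auto simp: graph_closure_def)
  fix x y x' y'
  assume xy: "(x, y) \<in> graph_closure X dX Y dY R" and xy': "(x', y') \<in> graph_closure X dX Y dY R"
  have "\<bar>dY y y' - dX x x'\<bar> \<le> 0 + e" if "e > 0" for e
  proof -
    obtain a b where ab: "(a, b) \<in> R" "dX x a < e/4" "dY y b < e/4"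
      using xy \<open>e > 0\<close> unfolding graph_closure_def by (auto dest!: spec[of _ "e/4"])
    obtain a' b' where ab': "(a', b') \<in> R" "dX x' a' < e/4" "dY y' b' < e/4"
      using xy' \<open>e > 0\<close> unfolding graph_closure_def by (auto dest!: spec[of _ "e/4"])
    have "a \<in> X" "a' \<in> X" "b \<in> Y" "b' \<in> Y" "x \<in> X" "x' \<in> X" "y \<in> Y" "y' \<in> Y"
      using ab ab' xy xy' R by (auto simp: partial_isometry_def graph_closure_def)
    then have "\<bar>dX x x' - dX a a'\<bar> \<le> dX x a + dX x' a'" "\<bar>dY y y' - dY b b'\<bar> \<le> dY y b + dY y' b'"
      by (simp_all add: X.mdist_diff_le Y.mdist_diff_le)
    moreover have "dY b b' = dX a a'"
      using partial_isometryD[OF R ab(1) ab'(1)] .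
    ultimately show ?thesis
      using ab ab' by linarith
  qed
  then show "dY y y' = dX x x'"
    using field_le_epsilon[of "\<bar>dY y y' - dX x x'\<bar>" 0] by simp
qed

lemma graph_closureI:
  assumes X: "Metric_space X dX" and Y: "Metric_space Y dY" and "\<And>n. (\<sigma> n, \<tau> n) \<in> R"
    and \<sigma>: "limitin (Metric_space.mtopology X dX) \<sigma> x sequentially"
    and \<tau>: "limitin (Metric_space.mtopology Y dY) \<tau> y sequentially"
  shows "(x, y) \<in> graph_closure X dX Y dY R"
  unfolding graph_closure_def
proof (clarsimp, intro conjI allI impI)
  interpret X: Metric_space X dX by fact
  interpret Y: Metric_space Y dY by fact
  show "x \<in> X" "y \<in> Y"
    using \<sigma> \<tau> X.limitin_mspace Y.limitin_mspace by auto
  fix e :: real assume "e > 0"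
  then have "\<forall>\<^sub>F n in sequentially. \<sigma> n \<in> X \<and> dX (\<sigma> n) x < e"
    and "\<forall>\<^sub>F n in sequentially. \<tau> n \<in> Y \<and> dY (\<tau> n) y < e"
    using \<sigma> \<tau> X.limitin_metric Y.limitin_metric by blast+
  then have "\<forall>\<^sub>F n in sequentially. dX (\<sigma> n) x < e \<and> dY (\<tau> n) y < e"
    by eventually_elim simp
  then obtain n where "dX (\<sigma> n) x < e" "dY (\<tau> n) y < e"
    using eventually_happens'[OF sequentially_bot] by blast
  then show "\<exists>a b. (a, b) \<in> R \<and> dX x a < e \<and> dY y b < e"
    using assms(3) X.commute Y.commute by metis
qed

lemma Domain_graph_closure:
  assumes X: "Metric_space X dX" and Y: "Metric_space Y dY" and "Metric_space.mcomplete Y dY"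
    and R: "partial_isometry X dX Y dY R"
    and dense: "Metric_space.mtopology X dX closure_of (Domain R) = X"
  shows "Domain (graph_closure X dX Y dY R) = X"
proof
  interpret X: Metric_space X dX by fact
  interpret Y: Metric_space Y dY by fact
  show "Domain (graph_closure X dX Y dY R) \<subseteq> X"
    by (auto simp: graph_closure_def)
  show "X \<subseteq> Domain (graph_closure X dX Y dY R)"
  proof
    fix x assume "x \<in> X"
    then obtain \<sigma> where \<sigma>: "range \<sigma> \<subseteq> Domain R \<inter> X" "limitin X.mtopology \<sigma> x sequentially"
      using dense X.closure_of_sequentially by blast
    then have "\<forall>n. \<exists>b. (\<sigma> n, b) \<in> R"
      by force
    then obtain \<tau> where \<tau>: "\<And>n. (\<sigma> n, \<tau> n) \<in> R"
      by metis
    have "range \<tau> \<subseteq> Y"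
      using \<tau> R by (auto simp: partial_isometry_def)
    moreover have "X.MCauchy \<sigma>"
      using \<sigma> X.convergent_imp_MCauchy by blast
    ultimately have "Y.MCauchy \<tau>"
      using partial_isometryD[OF R \<tau> \<tau>] by (simp add: X.MCauchy_def Y.MCauchy_def)
    then obtain y where "limitin Y.mtopology \<tau> y sequentially"
      using \<open>Y.mcomplete\<close> Y.mcomplete_def by blast
    then have "(x, y) \<in> graph_closure X dX Y dY R"
      using graph_closureI[OF X Y \<tau> \<sigma>(2)] by blast
    then show "x \<in> Domain (graph_closure X dX Y dY R)"
      by force
  qed
qed

lemma isometric_if_partial_isometry_onto:
  assumes X: "Metric_space X dX" and Y: "Metric_space Y dY" and R: "partial_isometry X dX Y dY R"
    and "Domain R = X" and "Range R = Y"
  shows "isometric X dX Y dY"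
proof -
  interpret X: Metric_space X dX by fact
  interpret Y: Metric_space Y dY by fact
  define f where "f x = (SOME y. (x, y) \<in> R)" for x
  have f: "(x, f x) \<in> R" if "x \<in> X" for x
    using that \<open>Domain R = X\<close> unfolding f_def by (force intro: someI)
  have iso: "\<forall>a\<in>X. \<forall>b\<in>X. dY (f a) (f b) = dX a b"
    using f partial_isometryD[OF R] by blast
  have "f ` X \<subseteq> Y"
    using f R by (auto simp: partial_isometry_def)
  have "inj_on f X"
    using iso \<open>f ` X \<subseteq> Y\<close> by (intro inj_onI) (metis X.zero)
  moreover have "Y \<subseteq> f ` X"
  proof
    fix y assume "y \<in> Y"
    then obtain x where xy: "(x, y) \<in> R"
      using \<open>Range R = Y\<close> by force
    then have "x \<in> X"
      using R by (auto simp: partial_isometry_def)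
    then have "dY y (f x) = 0"
      using partial_isometryD[OF R xy f] by simp
    then have "y = f x"
      using \<open>y \<in> Y\<close> \<open>x \<in> X\<close> \<open>f ` X \<subseteq> Y\<close> by auto
    then show "y \<in> f ` X"
      using \<open>x \<in> X\<close> by blast
  qed
  ultimately show ?thesis
    unfolding isometric_def using iso \<open>f ` X \<subseteq> Y\<close> by (metis bij_betw_imageI subset_antisym)
qed

lemma separable_space_dense_sequence:
  assumes "Metric_space X d" and "separable_space (Metric_space.mtopology X d)" and "X \<noteq> {}"
  obtains xs :: "nat \<Rightarrow> 'a" where "range xs \<subseteq> X" "Metric_space.mtopology X d closure_of range xs = X"
proof -
  obtain C where C: "countable C" "C \<subseteq> X" "Metric_space.mtopology X d closure_of C = X"
    using assms by (auto simp: separable_space_def Metric_space.topspace_mtopology)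
  then have "C \<noteq> {}"
    using \<open>X \<noteq> {}\<close> by auto
  then show ?thesis
    using that[of "from_nat_into C"] C by simp
qed

lemma closure_of_eq_topspace_mono:
  assumes "T closure_of A = topspace T" and "A \<subseteq> B"
  shows "T closure_of B = topspace T"
  using assms closure_of_mono closure_of_subset_topspace by (metis subset_antisym)

lemma partial_isometry_exhausting:
  assumes X: "Metric_space X dX" and Y: "Metric_space Y dY"
    and extX: "extension_property X dX" and extY: "extension_property Y dY"
    and xs: "range (xs :: nat \<Rightarrow> 'a) \<subseteq> X" and ys: "range (ys :: nat \<Rightarrow> 'b) \<subseteq> Y"
  obtains R where "partial_isometry X dX Y dY R" "range xs \<subseteq> Domain R" "range ys \<subseteq> Range R"
proof -
  define P where "P n R \<longleftrightarrow> finite R \<and> partial_isometry X dX Y dY R \<and>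
    xs ` {..<n} \<subseteq> Domain R \<and> ys ` {..<n} \<subseteq> Range R" for n R
  have "\<exists>Rs. \<forall>n. P n (Rs n) \<and> Rs n \<subseteq> Rs (Suc n)"
  proof (rule dependent_nat_choice)
    show "\<exists>R. P 0 R"
      by (auto simp: P_def partial_isometry_def intro!: exI[of _ "{}"])
  next
    fix R n assume "P n R"
    obtain R' where "R \<subseteq> R'" "finite R'" "partial_isometry X dX Y dY R'"
      "xs n \<in> Domain R'" "ys n \<in> Range R'"
      by (rule partial_isometry_back_and_forth[OF X Y extX extY])
        (use \<open>P n R\<close> xs ys in \<open>auto simp: P_def\<close>)
    moreover have "xs ` {..<n} \<subseteq> Domain R'" "ys ` {..<n} \<subseteq> Range R'"
      using \<open>P n R\<close> Domain_mono[OF \<open>R \<subseteq> R'\<close>] Range_mono[OF \<open>R \<subseteq> R'\<close>] unfolding P_def by blast+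
    ultimately show "\<exists>R'. P (Suc n) R' \<and> R \<subseteq> R'"
      using \<open>P n R\<close> by (intro exI[of _ R']) (auto simp: P_def lessThan_Suc)
  qed
  then obtain Rs where Rs: "\<And>n. P n (Rs n)" "incseq Rs"
    by (auto intro: incseq_SucI)
  have "partial_isometry X dX Y dY (\<Union>n. Rs n)"
    using Rs by (intro partial_isometry_UN_incseq) (auto simp: P_def)
  moreover have "xs k \<in> Domain (Rs (Suc k))" "ys k \<in> Range (Rs (Suc k))" for k
    using Rs(1)[of "Suc k"] by (auto simp: P_def)
  then have "range xs \<subseteq> Domain (\<Union>n. Rs n)" "range ys \<subseteq> Range (\<Union>n. Rs n)"
    by blast+
  ultimately show ?thesis
    by (rule that)
qed

theorem isometric_if_extension_property:
  assumes X: "Metric_space X dX" and Y: "Metric_space Y dY"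
    and "Metric_space.mcomplete X dX" and "Metric_space.mcomplete Y dY"
    and "separable_space (Metric_space.mtopology X dX)" and "separable_space (Metric_space.mtopology Y dY)"
    and extX: "extension_property X dX" and extY: "extension_property Y dY"
  shows "isometric X dX Y dY"
proof -
  interpret X: Metric_space X dX by fact
  interpret Y: Metric_space Y dY by fact
  obtain xs :: "nat \<Rightarrow> 'a" where xs: "range xs \<subseteq> X" "X.mtopology closure_of range xs = X"
    using separable_space_dense_sequence[OF X] assms extension_property_nonempty by blast
  obtain ys :: "nat \<Rightarrow> 'b" where ys: "range ys \<subseteq> Y" "Y.mtopology closure_of range ys = Y"
    using separable_space_dense_sequence[OF Y] assms extension_property_nonempty by blast
  obtain R where R: "partial_isometry X dX Y dY R" and "range xs \<subseteq> Domain R" "range ys \<subseteq> Domain (R\<inverse>)"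
    using partial_isometry_exhausting[OF X Y extX extY xs(1) ys(1)] by auto
  then have "X.mtopology closure_of Domain R = X" "Y.mtopology closure_of Domain (R\<inverse>) = Y"
    using closure_of_eq_topspace_mono[of X.mtopology "range xs"]
      closure_of_eq_topspace_mono[of Y.mtopology "range ys"] xs(2) ys(2) by simp_all
  then have "Domain (graph_closure X dX Y dY R) = X" "Range (graph_closure X dX Y dY R) = Y"
    using Domain_graph_closure[OF X Y \<open>Y.mcomplete\<close> R]
      Domain_graph_closure[OF Y X \<open>X.mcomplete\<close>, of "R\<inverse>"] R
    by (simp_all add: graph_closure_converse)
  then show ?thesis
    using isometric_if_partial_isometry_onto[OF X Y partial_isometry_graph_closure[OF X Y R]] by blast
qed

section \<open>Bi-Lipschitz bijections\<close>

lemma bi_lipschitz_le: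
  assumes "Metric_space X dX" and "Metric_space Y dY" and "bi_lipschitz L f X dX dY"
    and "f ` X \<subseteq> Y" and "a \<in> X" and "b \<in> X"
  shows "dY (f a) (f b) \<le> L * dX a b" and "dX a b \<le> L * dY (f a) (f b)"
proof -
  have "dY (f a) (f b) \<le> L * dX a b \<and> dX a b \<le> L * dY (f a) (f b)"
  proof (cases "a = b")
    case True
    then show ?thesis
      using Metric_space.mdist_zero[OF assms(1) \<open>a \<in> X\<close>] Metric_space.mdist_zero[OF assms(2), of "f a"] assms(4,5)
      by auto
  next
    case False
    then show ?thesis
      using assms unfolding bi_lipschitz_def by (simp add: less_imp_le)
  qed
  then show "dY (f a) (f b) \<le> L * dX a b" and "dX a b \<le> L * dY (f a) (f b)"
    by simp_all
qed

lemma MCauchy_Lipschitz_image: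
  assumes X: "Metric_space X dX" and Y: "Metric_space Y dY" and \<sigma>: "Metric_space.MCauchy X dX \<sigma>"
    and "f ` X \<subseteq> Y" and "0 < L" and Lip: "\<And>a b. a \<in> X \<Longrightarrow> b \<in> X \<Longrightarrow> dY (f a) (f b) \<le> L * dX a b"
  shows "Metric_space.MCauchy Y dY (f \<circ> \<sigma>)"
  unfolding Metric_space.MCauchy_def[OF Y]
proof (intro conjI allI impI)
  have "\<sigma> n \<in> X" for n
    using \<sigma> by (auto simp: Metric_space.MCauchy_def[OF X])
  then show "range (f \<circ> \<sigma>) \<subseteq> Y"
    using \<open>f ` X \<subseteq> Y\<close> by auto
  fix \<epsilon> :: real assume "\<epsilon> > 0"
  then obtain N where N: "\<And>n n'. N \<le> n \<Longrightarrow> N \<le> n' \<Longrightarrow> dX (\<sigma> n) (\<sigma> n') < \<epsilon> / L"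
    using \<sigma> \<open>0 < L\<close> unfolding Metric_space.MCauchy_def[OF X] by (meson divide_pos_pos)
  have "dY (f (\<sigma> n)) (f (\<sigma> n')) < \<epsilon>" if "N \<le> n" "N \<le> n'" for n n'
  proof -
    have "L * dX (\<sigma> n) (\<sigma> n') < \<epsilon>"
      using N[OF that] \<open>0 < L\<close> by (simp add: pos_less_divide_eq mult.commute)
    then show ?thesis
      using Lip[OF \<open>\<sigma> n \<in> X\<close> \<open>\<sigma> n' \<in> X\<close>] by linarith
  qed
  then show "\<exists>N. \<forall>n n'. N \<le> n \<longrightarrow> N \<le> n' \<longrightarrow> dY ((f \<circ> \<sigma>) n) ((f \<circ> \<sigma>) n') < \<epsilon>"
    by auto
qed

lemma limitin_if_co_Lipschitz:
  assumes X: "Metric_space X dX" and Y: "Metric_space Y dY"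
    and lim: "limitin (Metric_space.mtopology Y dY) (f \<circ> \<sigma>) (f x) sequentially"
    and "range \<sigma> \<subseteq> X" and "x \<in> X" and "0 < L" and coLip: "\<And>a. a \<in> X \<Longrightarrow> dX a x \<le> L * dY (f a) (f x)"
  shows "limitin (Metric_space.mtopology X dX) \<sigma> x sequentially"
  unfolding Metric_space.limitin_metric[OF X]
proof (intro conjI allI impI)
  show "x \<in> X" by fact
  fix \<epsilon> :: real assume "\<epsilon> > 0"
  then have "\<forall>\<^sub>F n in sequentially. f (\<sigma> n) \<in> Y \<and> dY (f (\<sigma> n)) (f x) < \<epsilon> / L"
    using lim \<open>0 < L\<close> unfolding Metric_space.limitin_metric[OF Y] by simp
  then show "\<forall>\<^sub>F n in sequentially. \<sigma> n \<in> X \<and> dX (\<sigma> n) x < \<epsilon>"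
  proof eventually_elim
    case (elim n)
    then have "L * dY (f (\<sigma> n)) (f x) < \<epsilon>"
      using \<open>0 < L\<close> by (simp add: pos_less_divide_eq mult.commute)
    moreover have "\<sigma> n \<in> X"
      using \<open>range \<sigma> \<subseteq> X\<close> by auto
    ultimately show ?case
      using coLip[of "\<sigma> n"] by (meson le_less_trans)
  qed
qed

lemma mcomplete_if_bi_lipschitz_onto:
  assumes X: "Metric_space X dX" and Y: "Metric_space Y dY" and "Metric_space.mcomplete Y dY"
    and f: "bij_betw f X Y" "bi_lipschitz L f X dX dY" and "0 < L"
  shows "Metric_space.mcomplete X dX"
  unfolding Metric_space.mcomplete_def[OF X]
proof (intro allI impI)
  have "f ` X = Y"
    using f by (simp add: bij_betw_def)
  note le = bi_lipschitz_le[OF X Y f(2) equalityD1[OF this]]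
  fix \<sigma> assume \<sigma>: "Metric_space.MCauchy X dX \<sigma>"
  then have "range \<sigma> \<subseteq> X"
    by (simp add: Metric_space.MCauchy_def[OF X])
  have "Metric_space.MCauchy Y dY (f \<circ> \<sigma>)"
    using MCauchy_Lipschitz_image[OF X Y \<sigma> _ \<open>0 < L\<close>] le(1) \<open>f ` X = Y\<close> by blast
  then obtain u where u: "limitin (Metric_space.mtopology Y dY) (f \<circ> \<sigma>) u sequentially"
    using \<open>Metric_space.mcomplete Y dY\<close> Metric_space.mcomplete_def[OF Y] by blast
  then obtain x where "x \<in> X" "u = f x"
    using Metric_space.limitin_mspace[OF Y] \<open>f ` X = Y\<close> by blast
  then have "limitin (Metric_space.mtopology X dX) \<sigma> x sequentially"
    using limitin_if_co_Lipschitz[OF X Y _ \<open>range \<sigma> \<subseteq> X\<close> _ \<open>0 < L\<close>] u le(2) by blast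
  then show "\<exists>x. limitin (Metric_space.mtopology X dX) \<sigma> x sequentially"
    by blast
qed

lemma separable_space_if_bi_lipschitz_onto:
  assumes X: "Metric_space X dX" and Y: "Metric_space Y dY"
    and "separable_space (Metric_space.mtopology Y dY)"
    and f: "bij_betw f X Y" "bi_lipschitz L f X dX dY" and "0 < L"
  shows "separable_space (Metric_space.mtopology X dX)"
proof -
  interpret X: Metric_space X dX by fact
  interpret Y: Metric_space Y dY by fact
  define g where "g = inv_into X f"
  have "f ` X = Y" "g ` Y = X"
    unfolding g_def using bij_betw_imp_surj_on[OF f(1)] bij_betw_imp_surj_on[OF bij_betw_inv_into[OF f(1)]] .
  have g: "g y \<in> X" "f (g y) = y" if "y \<in> Y" for y
    using f(1) that unfolding g_def bij_betw_def by (auto intro: inv_into_into f_inv_into_f)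
  note le = bi_lipschitz_le[OF X Y f(2) equalityD1[OF \<open>f ` X = Y\<close>]]
  have "continuous_map Y.mtopology X.mtopology g"
    unfolding Y.metric_continuous_map[OF X]
  proof (intro conjI ballI allI impI)
    show "g ` Y \<subseteq> X"
      using \<open>g ` Y = X\<close> by simp
    fix y and \<epsilon> :: real assume "y \<in> Y" "\<epsilon> > 0"
    have "dX (g y) (g y') < \<epsilon>" if "y' \<in> Y" "dY y y' < \<epsilon> / L" for y'
    proof -
      have "L * dY y y' < \<epsilon>"
        using that \<open>0 < L\<close> by (simp add: pos_less_divide_eq mult.commute)
      then show ?thesis
        using le(2)[OF g(1) g(1), of y y'] g(2) \<open>y \<in> Y\<close> \<open>y' \<in> Y\<close> by simp
    qed
    then show "\<exists>\<delta>>0. \<forall>y'. y' \<in> Y \<and> dY y y' < \<delta> \<longrightarrow> dX (g y) (g y') < \<epsilon>"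
      using \<open>\<epsilon> > 0\<close> \<open>0 < L\<close> by (auto intro!: exI[of _ "\<epsilon> / L"])
  qed
  then show ?thesis
    by (rule separable_space_continuous_map_image[OF \<open>separable_space Y.mtopology\<close>])
      (simp add: \<open>g ` Y = X\<close>)
qed

section \<open>Approximate realization of Katetov functions\<close>

lemma katetov_bi_lipschitz_image:
  assumes X: "Metric_space X dX" and U: "Metric_space U dU"
    and f: "bij_betw f X U" "bi_lipschitz L f X dX dU" and "1 < L"
    and kat: "katetov X dX A r" and R: "\<And>a. a \<in> A \<Longrightarrow> r a \<le> R"
  shows "katetov U dU (f ` A) (\<lambda>u. r (inv_into X f u) / L + (L - 1/L) * R)"
proof -
  have "f ` X = U" and inj: "inj_on f X"
    using f(1) by (auto simp: bij_betw_def)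
  note le = bi_lipschitz_le[OF X U f(2) equalityD1[OF \<open>f ` X = U\<close>]]
  note A = katetovD[OF kat]
  have "0 < L" "1/L < 1"
    using \<open>1 < L\<close> by simp_all
  then have "0 \<le> L - 1/L"
    using \<open>1 < L\<close> by linarith
  (* c absorbs the distortion of the upper Katetov inequality *)
  define c where "c = (L - 1/L) * R"
  define r' where "r' u = r (inv_into X f u) / L + c" for u
  have r': "r' (f a) = r a / L + c" if "a \<in> A" for a
    unfolding r'_def using inj A(2) that by auto
  have pos: "0 < r' (f a)" if "a \<in> A" for a
    using r' R[OF that] A(3)[OF that] \<open>0 < L\<close> \<open>0 \<le> L - 1/L\<close> that unfolding c_def
    by (simp add: add_pos_nonneg)
  have lip: "r' (f a) \<le> r' (f b) + dU (f a) (f b)"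
    and tri: "dU (f a) (f b) \<le> r' (f a) + r' (f b)" if "a \<in> A" "b \<in> A" for a b
  proof -
    have ab: "a \<in> X" "b \<in> X"
      using A(2) that by auto
    have "r a / L \<le> (r b + dX a b) / L"
      using A(4)[OF that] \<open>0 < L\<close> by (simp add: divide_right_mono)
    moreover have "dX a b / L \<le> dU (f a) (f b)"
      using le(2)[OF ab] \<open>0 < L\<close> by (simp add: pos_divide_le_eq mult.commute)
    ultimately show "r' (f a) \<le> r' (f b) + dU (f a) (f b)"
      using r' that by (simp add: add_divide_distrib)
    have "dX a b \<le> 2 * R"
      using A(5)[OF that] R[OF that(1)] R[OF that(2)] by linarith
    then have "(L - 1/L) * dX a b \<le> 2 * c"
      unfolding c_def using \<open>0 \<le> L - 1/L\<close> by (metis mult.left_commute mult_left_mono)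
    moreover have "dX a b / L \<le> (r a + r b) / L"
      using A(5)[OF that] \<open>0 < L\<close> by (simp add: divide_right_mono)
    moreover have "L * dX a b = dX a b / L + (L - 1/L) * dX a b"
      using \<open>0 < L\<close> by (simp add: field_simps)
    ultimately show "dU (f a) (f b) \<le> r' (f a) + r' (f b)"
      using le(1)[OF ab] r' that by (simp add: add_divide_distrib)
  qed
  show ?thesis
    using A(1,2) \<open>f ` X = U\<close> pos lip tri unfolding katetov_def r'_def c_def by auto
qed

lemma distorted_distance_error:
  fixes L R s t \<rho> :: real
  assumes "1 < L" and "s = \<rho> / L + (L - 1/L) * R" and "0 < \<rho>" and "\<rho> \<le> R"
    and "s \<le> L * t" and "t \<le> L * s"
  shows "\<bar>t - \<rho>\<bar> \<le> (L\<^sup>2 - 1) * R"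
proof -
  have "0 < L" "1/L < 1" "0 \<le> L\<^sup>2 - 1"
    using assms(1) by simp_all
  then have "0 \<le> L - 1/L"
    using assms(1) by linarith
  then have "0 \<le> (L - 1/L) * R"
    using assms(3,4) by simp
  have "L * s = \<rho> + (L\<^sup>2 - 1) * R"
    using assms(2) \<open>0 < L\<close> by (simp add: field_simps power2_eq_square)
  then have upper: "t - \<rho> \<le> (L\<^sup>2 - 1) * R"
    using assms(6) by simp
  have "\<rho> / L \<le> L * t"
    using assms(2,5) \<open>0 \<le> (L - 1/L) * R\<close> by linarith
  then have "\<rho> \<le> (L * t) * L"
    using \<open>0 < L\<close> by (simp only: pos_divide_le_eq)
  then have "\<rho> \<le> L\<^sup>2 * t"
    by (simp add: power2_eq_square mult_ac)
  have lower: "\<rho> - t \<le> (L\<^sup>2 - 1) * R"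
  proof (cases "t \<le> R")
    case True
    have "(L\<^sup>2 - 1) * t \<le> (L\<^sup>2 - 1) * R"
      using True \<open>0 \<le> L\<^sup>2 - 1\<close> by (rule mult_left_mono)
    then show ?thesis
      using \<open>\<rho> \<le> L\<^sup>2 * t\<close> by (simp add: left_diff_distrib)
  next
    case False
    moreover have "0 \<le> (L\<^sup>2 - 1) * R"
      using \<open>0 \<le> L\<^sup>2 - 1\<close> assms(3,4) by simp
    ultimately show ?thesis
      using assms(4) by linarith
  qed
  show ?thesis
    using upper lower by linarith
qed

lemma bi_lipschitz_approx_realization:
  assumes X: "Metric_space X dX" and U: "Metric_space U dU" and ext: "extension_property U dU"
    and f: "bij_betw f X U" "bi_lipschitz L f X dX dU" and "1 < L"
    and kat: "katetov X dX A r" and R: "\<And>a. a \<in> A \<Longrightarrow> r a \<le> R"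
  obtains y where "y \<in> X" "\<forall>a\<in>A. \<bar>dX y a - r a\<bar> \<le> (L\<^sup>2 - 1) * R"
proof -
  have "f ` X = U" and inj: "inj_on f X"
    using f(1) by (auto simp: bij_betw_def)
  note le = bi_lipschitz_le[OF X U f(2) equalityD1[OF \<open>f ` X = U\<close>]]
  note A = katetovD[OF kat]
  obtain u where "u \<in> U" and u: "\<forall>a\<in>A. dU u (f a) = r (inv_into X f (f a)) / L + (L - 1/L) * R"
    using ext katetov_bi_lipschitz_image[OF X U f \<open>1 < L\<close> kat R]
    unfolding extension_property_def by blast
  then obtain y where "y \<in> X" "u = f y"
    using \<open>f ` X = U\<close> by blast
  have "\<bar>dX y a - r a\<bar> \<le> (L\<^sup>2 - 1) * R" if "a \<in> A" for a
  proof (rule distorted_distance_error[OF \<open>1 < L\<close> _ A(3)[OF that] R[OF that]])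
    have "a \<in> X"
      using A(2) that by auto
    then show "dU (f y) (f a) = r a / L + (L - 1/L) * R"
      using u inj that \<open>u = f y\<close> by simp
    show "dU (f y) (f a) \<le> L * dX y a" "dX y a \<le> L * dU (f y) (f a)"
      using le[OF \<open>y \<in> X\<close> \<open>a \<in> X\<close>] by simp_all
  qed
  then show ?thesis
    using that \<open>y \<in> X\<close> by blast
qed

lemma approx_extension_property_if_almost_isometric:
  assumes X: "Metric_space X dX" and U: "Metric_space U dU" and ext: "extension_property U dU"
    and "almost_isometric X dX U dU"
  shows "approx_extension_property X dX"
  unfolding approx_extension_property_def
proof (intro allI impI, elim conjE)
  fix A r and e :: real assume kat: "katetov X dX A r" and "0 < e"
  note A = katetovD[OF kat]
  define R where "R = (\<Sum>a\<in>A. r a)"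
  have R: "r a \<le> R" if "a \<in> A" for a
    unfolding R_def using A(1,3) that by (intro member_le_sum) (auto intro: less_imp_le)
  have "0 \<le> R"
    unfolding R_def using A(3) by (intro sum_nonneg) (auto intro: less_imp_le)
  define L where "L = sqrt (1 + e / (R + 1))"
  have "L\<^sup>2 = 1 + e / (R + 1)" "1 < L"
    unfolding L_def using \<open>0 < e\<close> \<open>0 \<le> R\<close> by simp_all
  then obtain f where f: "bij_betw f X U" "bi_lipschitz L f X dX dU"
    using \<open>almost_isometric X dX U dU\<close> unfolding almost_isometric_def by blast
  obtain y where "y \<in> X" "\<forall>a\<in>A. \<bar>dX y a - r a\<bar> \<le> (L\<^sup>2 - 1) * R"
    using bi_lipschitz_approx_realization[OF X U ext f \<open>1 < L\<close> kat R] by blast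
  moreover have "(L\<^sup>2 - 1) * R = e * (R / (R + 1))"
    using \<open>L\<^sup>2 = 1 + e / (R + 1)\<close> by simp
  moreover have "e * (R / (R + 1)) \<le> e"
    using \<open>0 < e\<close> \<open>0 \<le> R\<close> by (intro mult_left_le) simp_all
  ultimately show "\<exists>y\<in>X. \<forall>a\<in>A. \<bar>dX y a - r a\<bar> \<le> e"
    by force
qed

lemma approx_realization_refine:
  assumes X: "Metric_space X dX" and approx: "approx_extension_property X dX"
    and kat: "katetov X dX A r" and "z \<in> X" and z: "\<forall>a\<in>A. \<bar>dX z a - r a\<bar> \<le> e"
    and "0 < e" and small: "\<forall>a\<in>A. e < r a" and "0 < e'"
  obtains z' where "z' \<in> X" "\<forall>a\<in>A. \<bar>dX z' a - r a\<bar> \<le> e'" "dX z' z \<le> e + e'"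
proof -
  interpret X: Metric_space X dX by fact
  note A = katetovD[OF kat]
  have "z \<notin> A"
    using z small \<open>z \<in> X\<close> by force
  have e_le: "e \<le> r a + dX a z" if "a \<in> A" for a
    using bspec[OF small that] X.nonneg[of a z] by linarith
  (* Prescribing distance e to z keeps the function Katetov, because z is e-close to realizing r
     and e is below all values of r. *)
  define r' where "r' = r(z := e)"
  have "katetov X dX (insert z A) r'"
    using A \<open>z \<in> X\<close> \<open>z \<notin> A\<close> \<open>0 < e\<close> z e_le X.commute
    unfolding katetov_def r'_def by (auto simp: abs_le_iff)
  then obtain z' where "z' \<in> X" and z': "\<forall>a\<in>insert z A. \<bar>dX z' a - r' a\<bar> \<le> e'"
    using approx \<open>0 < e'\<close> unfolding approx_extension_property_def by blast
  moreover have "\<forall>a\<in>A. \<bar>dX z' a - r a\<bar> \<le> e'"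
  proof
    fix a assume "a \<in> A"
    then show "\<bar>dX z' a - r a\<bar> \<le> e'"
      using z' \<open>z \<notin> A\<close> unfolding r'_def by (metis fun_upd_other insertCI)
  qed
  moreover have "dX z' z \<le> e + e'"
    using z' unfolding r'_def by (auto simp: abs_le_iff)
  ultimately show ?thesis
    using that by blast
qed

lemma (in Metric_space) mdist_le_geometric_tail:
  assumes "range \<sigma> \<subseteq> M" and step: "\<And>n. d (\<sigma> n) (\<sigma> (Suc n)) \<le> C * (1/2)^n" and "m \<le> n"
  shows "d (\<sigma> m) (\<sigma> n) \<le> 2 * C * (1/2)^m"
proof -
  have \<sigma>: "\<sigma> n \<in> M" for n
    using assms(1) by auto
  have tail: "d (\<sigma> m) (\<sigma> (m + k)) \<le> 2 * C * (1/2)^m - 2 * C * (1/2)^(m + k)" for k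
  proof (induction k)
    case 0
    then show ?case using \<sigma> by simp
  next
    case (Suc k)
    have "d (\<sigma> m) (\<sigma> (m + Suc k)) \<le> d (\<sigma> m) (\<sigma> (m + k)) + d (\<sigma> (m + k)) (\<sigma> (Suc (m + k)))"
      using triangle \<sigma> by simp
    then show ?case
      using Suc step[of "m + k"] by simp
  qed
  have "0 \<le> C"
    using order_trans[OF nonneg step[of 0]] by simp
  then have "0 \<le> C * (1/2::real)^n"
    by simp
  then show ?thesis
    using tail[of "n - m"] \<open>m \<le> n\<close> by simp
qed

lemma (in Metric_space) MCauchy_if_dist_Suc_le_geometric:
  assumes "range \<sigma> \<subseteq> M" and step: "\<And>n. d (\<sigma> n) (\<sigma> (Suc n)) \<le> C * (1/2)^n"
  shows "MCauchy \<sigma>"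
  unfolding MCauchy_def
proof (intro conjI allI impI)
  show "range \<sigma> \<subseteq> M" by fact
  fix \<epsilon> :: real assume "\<epsilon> > 0"
  have "(\<lambda>N. 4 * C * (1/2::real)^N) \<longlonglongrightarrow> 0"
    by (intro tendsto_mult_right_zero LIMSEQ_power_zero) simp
  then obtain N where N: "4 * C * (1/2)^N < \<epsilon>"
    using order_tendstoD(2)[OF _ \<open>\<epsilon> > 0\<close>] by (metis eventually_sequentially order_refl)
  show "\<exists>N. \<forall>n n'. N \<le> n \<longrightarrow> N \<le> n' \<longrightarrow> d (\<sigma> n) (\<sigma> n') < \<epsilon>"
  proof (intro exI allI impI)
    fix n n' assume "N \<le> n" "N \<le> n'"
    then have "d (\<sigma> n) (\<sigma> n') \<le> d (\<sigma> N) (\<sigma> n) + d (\<sigma> N) (\<sigma> n')"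
      using triangle'' assms(1) by blast
    also have "\<dots> \<le> 4 * C * (1/2)^N"
      using mdist_le_geometric_tail[OF assms \<open>N \<le> n\<close>] mdist_le_geometric_tail[OF assms \<open>N \<le> n'\<close>] by simp
    finally show "d (\<sigma> n) (\<sigma> n') < \<epsilon>"
      using N by simp
  qed
qed

lemma approx_realization_chain:
  assumes X: "Metric_space X dX" and approx: "approx_extension_property X dX"
    and kat: "katetov X dX A r" and "0 < m" and m: "\<And>a. a \<in> A \<Longrightarrow> m \<le> r a"
  obtains zs where "range zs \<subseteq> X" "\<And>n a. a \<in> A \<Longrightarrow> \<bar>dX (zs n) a - r a\<bar> \<le> m / 2 * (1/2)^n"
    "\<And>n. dX (zs n) (zs (Suc n)) \<le> m * (1/2)^n"
proof -
  define e where "e n = m / 2 * (1/2)^n" for n :: nat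
  have e: "0 < e n" "e n < m" for n
  proof -
    have "e n \<le> m / 2"
      unfolding e_def using \<open>0 < m\<close> by (intro mult_left_le) (simp_all add: power_le_one)
    then show "0 < e n" "e n < m"
      unfolding e_def using \<open>0 < m\<close> by simp_all
  qed
  define P where "P n z \<longleftrightarrow> z \<in> X \<and> (\<forall>a\<in>A. \<bar>dX z a - r a\<bar> \<le> e n)" for n z
  have "\<exists>zs. \<forall>n. P n (zs n) \<and> dX (zs (Suc n)) (zs n) \<le> e n + e (Suc n)"
  proof (rule dependent_nat_choice)
    show "\<exists>z. P 0 z"
      using approx kat e(1) unfolding approx_extension_property_def P_def by blast
  next
    fix z n assume "P n z"
    then have "z \<in> X" "\<forall>a\<in>A. \<bar>dX z a - r a\<bar> \<le> e n"
      by (simp_all add: P_def)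
    moreover have "\<forall>a\<in>A. e n < r a"
      using e(2)[of n] m by (auto intro: less_le_trans)
    ultimately obtain z' where "z' \<in> X" "\<forall>a\<in>A. \<bar>dX z' a - r a\<bar> \<le> e (Suc n)" "dX z' z \<le> e n + e (Suc n)"
      using approx_realization_refine[OF X approx kat _ _ e(1)[of n] _ e(1)[of "Suc n"]] by blast
    then show "\<exists>z'. P (Suc n) z' \<and> dX z' z \<le> e n + e (Suc n)"
      unfolding P_def by blast
  qed
  then obtain zs where "\<And>n. P n (zs n)" and step: "\<And>n. dX (zs (Suc n)) (zs n) \<le> e n + e (Suc n)"
    by blast
  moreover have "dX (zs n) (zs (Suc n)) \<le> m * (1/2)^n" for n
  proof -
    have "e (Suc n) = e n / 2" "2 * e n = m * (1/2)^n"
      by (simp_all add: e_def)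
    then show ?thesis
      using step[of n] e(1)[of n] Metric_space.commute[OF X, of "zs n" "zs (Suc n)"] by linarith
  qed
  ultimately show ?thesis
    using that unfolding P_def e_def by blast
qed

lemma (in Metric_space) tendsto_mdist_limitin:
  assumes "limitin mtopology \<sigma> l sequentially" and "a \<in> M"
  shows "(\<lambda>n. d (\<sigma> n) a) \<longlonglongrightarrow> d l a"
  unfolding LIMSEQ_iff real_norm_def
proof (intro allI impI)
  fix \<epsilon> :: real assume "\<epsilon> > 0"
  then obtain N where N: "\<And>n. N \<le> n \<Longrightarrow> \<sigma> n \<in> M \<and> d (\<sigma> n) l < \<epsilon>"
    using assms(1) unfolding limit_metric_sequentially by blast
  have "\<bar>d (\<sigma> n) a - d l a\<bar> < \<epsilon>" if "N \<le> n" for n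
    using mdist_diff_le[of "\<sigma> n" l a a] N[OF that] limitin_mspace[OF assms(1)] \<open>a \<in> M\<close> by simp
  then show "\<exists>N. \<forall>n\<ge>N. \<bar>d (\<sigma> n) a - d l a\<bar> < \<epsilon>"
    by blast
qed

lemma extension_property_if_approx_mcomplete:
  assumes X: "Metric_space X dX" and "Metric_space.mcomplete X dX"
    and approx: "approx_extension_property X dX"
  shows "extension_property X dX"
  unfolding extension_property_def
proof (intro allI impI)
  interpret X: Metric_space X dX by fact
  fix A r assume kat: "katetov X dX A r"
  (* the 1 keeps the minimum defined for empty A *)
  define m where "m = Min (insert 1 (r ` A))"
  have "0 < m" and "\<And>a. a \<in> A \<Longrightarrow> m \<le> r a"
    unfolding m_def using katetovD(1,3)[OF kat] by auto
  then obtain zs where zs: "range zs \<subseteq> X" "\<And>n a. a \<in> A \<Longrightarrow> \<bar>dX (zs n) a - r a\<bar> \<le> m / 2 * (1/2)^n"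
    and "\<And>n. dX (zs n) (zs (Suc n)) \<le> m * (1/2)^n"
    using approx_realization_chain[OF X approx kat] by metis
  then have "X.MCauchy zs"
    by (intro X.MCauchy_if_dist_Suc_le_geometric)
  then obtain z where lim: "limitin X.mtopology zs z sequentially"
    using \<open>X.mcomplete\<close> X.mcomplete_def by blast
  have "dX z a = r a" if "a \<in> A" for a
  proof (rule LIMSEQ_unique)
    show "(\<lambda>n. dX (zs n) a) \<longlonglongrightarrow> dX z a"
      using X.tendsto_mdist_limitin[OF lim] katetovD(2)[OF kat] that by auto
    have "(\<lambda>n. m / 2 * (1/2::real)^n) \<longlonglongrightarrow> 0"
      by (intro tendsto_mult_right_zero LIMSEQ_power_zero) simp
    then have "(\<lambda>n. dX (zs n) a - r a) \<longlonglongrightarrow> 0"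
      by (rule Lim_null_comparison[rotated]) (use zs(2)[OF that] in simp)
    then show "(\<lambda>n. dX (zs n) a) \<longlonglongrightarrow> r a"
      by (rule LIM_zero_cancel)
  qed
  then show "\<exists>y\<in>X. \<forall>a\<in>A. dX y a = r a"
    using X.limitin_mspace[OF lim] by blast
qed

theorem theorem3p8:
  fixes U :: "'a set" and dU :: "'a \<Rightarrow> 'a \<Rightarrow> real"
    and X :: "'b set" and dX :: "'b \<Rightarrow> 'b \<Rightarrow> real"
  assumes "Urysohn_space U dU"
    and "Metric_space X dX"
    and "almost_isometric X dX U dU"
  shows "isometric X dX U dU"
proof -
  have U: "Metric_space U dU" and "Metric_space.mcomplete U dU"
    and "separable_space (Metric_space.mtopology U dU)"
    using assms(1) by (auto simp: Urysohn_space_def)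
  have extU: "extension_property U dU"
    using assms(1) by (rule Urysohn_space_extension_property)
  obtain f where f: "bij_betw f X U" "bi_lipschitz 2 f X dX dU"
    using assms(3) unfolding almost_isometric_def by force
  have "Metric_space.mcomplete X dX"
    using mcomplete_if_bi_lipschitz_onto[OF assms(2) U _ f] \<open>Metric_space.mcomplete U dU\<close> by simp
  moreover have "separable_space (Metric_space.mtopology X dX)"
    using separable_space_if_bi_lipschitz_onto[OF assms(2) U _ f] \<open>separable_space _\<close> by simp
  moreover have "extension_property X dX"
    using extension_property_if_approx_mcomplete[OF assms(2) \<open>Metric_space.mcomplete X dX\<close>]
      approx_extension_property_if_almost_isometric[OF assms(2) U extU assms(3)] by blast
  ultimately show ?thesis
    using isometric_if_extension_property[OF assms(2) U] \<open>Metric_space.mcomplete U dU\<close>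
      \<open>separable_space (Metric_space.mtopology U dU)\<close> extU by blast
qed

end
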